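(* Let $\mathcal{G}$ be the affine plane of order $3$, let $\ell=\{a_1,a_2,a_3\}$, $m=\{b_1,b_2,b_3\}$, $n=\{c_1,c_2,c_3\}$ be its three pairwise parallel lines in one parallel class, let $R$ be a commutative ring with $2=0$, $A=M_R(\mathcal{G},1)$, and let $s$ be the sum of all $9$ points. Identify each line with the sum of its points in $A$. Then $\operatorname{ad}_\ell$ has eigenvalues $0$ and $1$, with eigenspaces \[ A^\ell_0=\langle a_1,a_2,a_3,s\rangle,\qquad A^\ell_1=\langle b_1+b_2,b_1+b_3,c_1+c_2,c_1+c_3\rangle, \] and generalized eigenspaces \[ \widetilde A^\ell_0=\langle a_1,a_2,a_3,m,n\rangle,\qquad \widetilde A^\ell_1=A^\ell_1 . \] In particular, $A=\widetilde A^\ell_0\oplus A^\ell_1$.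
   Context: The affine plane of order $3$ is the partial linear space of the $9$ points and $12$ lines of the affine plane over $\mathbb{F}_3$; any two distinct points $p,q$ are collinear (written $p\sim q$) and $p\wedge q$ is the third point of their line. The nilpotent Matsuo algebra $A=M_R(\mathcal{G},1)$ is the free $R$-module with basis the points and commutative bilinear product $p\cdot q=0$ if $p=q$, $p\cdot q=p+q+p\wedge q$ if $p\sim q$. $\operatorname{ad}_\ell(v)=\ell v$; eigenspace for $\lambda$: $\{v:\ell v=\lambda v\}$; generalized eigenspace: $\{v:(\operatorname{ad}_\ell-\lambda)^kv=0 \text{ for some } k\}$. Angle brackets denote $R$-linear span. *)

theory Defs
  imports Main "HOL-Library.Numeral_Type" "HOL-Library.Function_Algebras"
begin

text \<open>Points of the affine plane of order 3: the affine plane over F_3,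
  with F_3 realised as the residue ring type 3 of HOL-Library.Numeral_Type.\<close>
type_synonym pt = "3 \<times> 3"

text \<open>For distinct points p, q (all distinct points are collinear) the third point
  of their line is -(p+q).\<close>
definition wedge :: "pt \<Rightarrow> pt \<Rightarrow> pt" where
  "wedge p q = (- fst p - fst q, - snd p - snd q)"

definition aff_lines :: "pt set set" where
  "aff_lines = {{p, q, wedge p q} | p q. p \<noteq> q}"

text \<open>Elements of A = M_R(G,1): R-valued functions on the (finite) point set.\<close>
definition ind :: "pt set \<Rightarrow> pt \<Rightarrow> 'r::comm_ring_1" where
  "ind S = (\<lambda>x. if x \<in> S then 1 else 0)"

definition pnt :: "pt \<Rightarrow> pt \<Rightarrow> 'r::comm_ring_1" where
  "pnt p = ind {p}"

definition basis_prod :: "pt \<Rightarrow> pt \<Rightarrow> pt \<Rightarrow> 'r::comm_ring_1" where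
  "basis_prod p q = (if p = q then (\<lambda>_. 0) else ind {p, q, wedge p q})"

definition mmult :: "(pt \<Rightarrow> 'r::comm_ring_1) \<Rightarrow> (pt \<Rightarrow> 'r) \<Rightarrow> pt \<Rightarrow> 'r" where
  "mmult u w = (\<lambda>x. \<Sum>p\<in>UNIV. \<Sum>q\<in>UNIV. u p * w q * basis_prod p q x)"

definition scal :: "'r::comm_ring_1 \<Rightarrow> (pt \<Rightarrow> 'r) \<Rightarrow> pt \<Rightarrow> 'r" where
  "scal c v = (\<lambda>x. c * v x)"

definition rspan :: "(pt \<Rightarrow> 'r::comm_ring_1) set \<Rightarrow> (pt \<Rightarrow> 'r) set" where
  "rspan S = {v. \<exists>f. v = (\<Sum>u\<in>S. scal (f u) u)}"

definition eigsp :: "(pt \<Rightarrow> 'r::comm_ring_1) \<Rightarrow> 'r \<Rightarrow> (pt \<Rightarrow> 'r) set" where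
  "eigsp l c = {v. mmult l v = scal c v}"

definition geigsp :: "(pt \<Rightarrow> 'r::comm_ring_1) \<Rightarrow> 'r \<Rightarrow> (pt \<Rightarrow> 'r) set" where
  "geigsp l c = {v. \<exists>k. ((\<lambda>w. mmult l w - scal c w) ^^ k) v = 0}"

definition is_eigenvalue :: "(pt \<Rightarrow> 'r::comm_ring_1) \<Rightarrow> 'r \<Rightarrow> bool" where
  "is_eigenvalue l c \<longleftrightarrow> (\<exists>v. v \<noteq> 0 \<and> mmult l v = scal c v)"

end

theory Submission
  imports Defs
begin

(*
  Write S_m and S_n for the sums of the coordinates of v over the lines m and n parallel to l.
  For q on l, l.q = 2l; for q on m, l.q = l + 3q + n, because as p runs over l the third point
  of the line pq runs over n (and symmetrically for q on n). When 2 = 0 this gives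

    (l.v)(x) = S_m + S_n on l,   v(x) + S_n on m,   v(x) + S_m on n.

  So l.v = 0 iff v is constant on m and n together, and l.v = v iff v vanishes on l and
  S_m = S_n = 0. Multiplication by l preserves and reflects being constant on m and constant
  on n, and sends such vectors to the 0-eigenspace: they form the generalised 0-eigenspace.
  The conditions of the 1-eigenspace are reflected by v \<mapsto> l.v - v, so it is already the
  generalised one. Finally v splits as x + (v - x), where x agrees with v on l and equals
  S_m on m and S_n on n.
*)

lemma minus_diff_eq_self_iff: "- a - b = (a::3) \<longleftrightarrow> b = a"
proof -
  have "- a - a = a - (3::3) * a" by (simp add: algebra_simps)
  also have "(3::3) = 0" by simp
  finally have self: "- a - a = a" by simp
  show ?thesis
  proof
    assume "- a - b = a"
    then have "- a - b = - a - a" by (simp add: self)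
    then show "b = a" by simp
  qed (simp add: self)
qed

lemma wedge_commute: "wedge p q = wedge q p"
  by (simp add: wedge_def algebra_simps)

lemma wedge_wedge_left [simp]: "wedge p (wedge p q) = q"
  by (simp add: wedge_def)

lemma wedge_wedge_right [simp]: "wedge (wedge p q) q = p"
  by (simp add: wedge_def)

lemma wedge_eq_left_iff [simp]:
  "wedge p q = p \<longleftrightarrow> q = p" "p = wedge p q \<longleftrightarrow> q = p"
proof -
  show "wedge p q = p \<longleftrightarrow> q = p"
    by (simp add: wedge_def prod_eq_iff minus_diff_eq_self_iff)
  then show "p = wedge p q \<longleftrightarrow> q = p" by auto
qed

lemma wedge_eq_right_iff [simp]:
  "wedge p q = q \<longleftrightarrow> p = q" "q = wedge p q \<longleftrightarrow> p = q"
  by (metis wedge_commute wedge_eq_left_iff(1))+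

lemma aff_line_through:
  assumes "L \<in> aff_lines" "x \<in> L" "y \<in> L" "x \<noteq> y"
  shows "L = {x, y, wedge x y}"
proof -
  obtain p q where "L = {p, q, wedge p q}" "p \<noteq> q"
    using assms(1) by (auto simp: aff_lines_def)
  then show ?thesis
    using assms(2-4) by (auto simp: wedge_commute)
qed

lemma card_aff_line:
  assumes "L \<in> aff_lines"
  shows "card L = 3"
proof -
  obtain p q where "L = {p, q, wedge p q}" "p \<noteq> q"
    using assms by (auto simp: aff_lines_def)
  then show ?thesis by simp
qed

lemma aff_line_nonempty: "L \<in> aff_lines \<Longrightarrow> L \<noteq> {}"
  using card_aff_line by fastforce

lemma ind_eq_sum_pnt: "finite S \<Longrightarrow> ind S x = (\<Sum>a\<in>S. pnt a x)"
  by (simp add: pnt_def ind_def)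

lemma sum_mult_pnt: "finite S \<Longrightarrow> (\<Sum>q\<in>S. v q * pnt q x) = ind S x * v x"
  by (simp add: pnt_def ind_def if_distrib[of "(*) _"] sum.If_cases)

lemma sum_ind_mult: "(\<Sum>p\<in>UNIV. ind S p * f p) = sum f S"
proof -
  have "(\<Sum>p\<in>UNIV. ind S p * f p) = (\<Sum>p\<in>UNIV. if p \<in> S then f p else 0)"
    by (intro sum.cong) (auto simp: ind_def)
  also have "\<dots> = sum f S"
    by (simp add: sum.If_cases)
  finally show ?thesis .
qed

lemma sum_basis_prod_same_line:
  assumes "L \<in> aff_lines" "q \<in> L"
  shows "(\<Sum>p\<in>L. basis_prod p q x) = 2 * ind L x"
proof -
  have "basis_prod p q x = (if p = q then 0 else ind L x)" if "p \<in> L" for p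
    using aff_line_through[OF assms(1) that assms(2)] by (auto simp: basis_prod_def)
  then have "(\<Sum>p\<in>L. basis_prod p q x) = (\<Sum>p\<in>L. if p = q then 0 else ind L x)"
    by (rule sum.cong[OF refl])
  also have "\<dots> = (\<Sum>p\<in>L - {q}. ind L x)"
    by (simp add: sum.If_cases Diff_eq Int_commute)
  also have "\<dots> = 2 * ind L x"
    using assms by (simp add: card_aff_line)
  finally show ?thesis .
qed

lemma char2_add_self:
  fixes x :: "'a::comm_ring_1"
  assumes "(2::'a) = 0"
  shows "x + x = 0"
  using assms by (metis mult_2 mult_zero_left)

lemma char2_add_eq_0_iff:
  fixes x :: "'a::comm_ring_1"
  assumes "(2::'a) = 0"
  shows "x + y = 0 \<longleftrightarrow> x = y"
  using char2_add_self[OF assms] by (metis add_diff_cancel_right')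

lemma char2_three_times:
  fixes x :: "'a::comm_ring_1"
  assumes "(2::'a) = 0"
  shows "3 * x = x"
proof -
  have "3 * x = 2 * x + x" by (simp add: algebra_simps)
  then show ?thesis using assms by simp
qed

lemma sum_aff_line_const:
  fixes v :: "pt \<Rightarrow> 'a::comm_ring_1"
  assumes "(2::'a) = 0" "L \<in> aff_lines" "\<And>x. x \<in> L \<Longrightarrow> v x = c"
  shows "sum v L = c"
proof -
  have "sum v L = (\<Sum>x\<in>L. c)" using assms(3) by (rule sum.cong[OF refl])
  then show ?thesis by (simp add: card_aff_line[OF assms(2)] char2_three_times[OF assms(1)])
qed

lemma is_eigenvalueI: "v \<in> eigsp L c \<Longrightarrow> v \<noteq> 0 \<Longrightarrow> is_eigenvalue L c"
  by (auto simp: is_eigenvalue_def eigsp_def)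

lemma funpow_reflects:
  assumes "\<And>w. P (f w) \<Longrightarrow> P w" and "P ((f ^^ k) v)"
  shows "P v"
  using assms(2)
proof (induction k arbitrary: v)
  case (Suc k)
  then have "P ((f ^^ k) (f v))" by (simp add: funpow_swap1)
  then show ?case using Suc.IH assms(1) by blast
qed simp

lemma rspan_empty: "rspan {} = {0}"
  by (simp add: rspan_def)

lemma mem_rspan_insert:
  assumes "finite S"
  shows "v \<in> rspan (insert u S) \<longleftrightarrow> (\<exists>c w. w \<in> rspan S \<and> v = scal c u + w)"
proof (cases "u \<in> S")
  case True
  have closed: "scal c u + (\<Sum>y\<in>S. scal (f y) y) \<in> rspan S" for c f
  proof -
    let ?g = "f(u := f u + c)"
    have "scal c u + (\<Sum>y\<in>S. scal (f y) y) = scal (f u + c) u + (\<Sum>y\<in>S - {u}. scal (f y) y)"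
      using assms True by (simp add: sum.remove scal_def algebra_simps fun_eq_iff)
    also have "\<dots> = (\<Sum>y\<in>S. scal (?g y) y)"
      using assms True by (simp add: sum.remove)
    finally show ?thesis by (auto simp: rspan_def)
  qed
  show ?thesis
  proof
    assume "v \<in> rspan (insert u S)"
    then have "v \<in> rspan S" using True by (simp add: insert_absorb)
    moreover have "v = scal 0 u + v" by (simp add: scal_def fun_eq_iff)
    ultimately show "\<exists>c w. w \<in> rspan S \<and> v = scal c u + w" by blast
  qed (use closed True in \<open>auto simp: rspan_def insert_absorb\<close>)
next
  case False
  show ?thesis
  proof
    assume "v \<in> rspan (insert u S)"
    then obtain f where "v = (\<Sum>y\<in>insert u S. scal (f y) y)" by (auto simp: rspan_def)
    then have "v = scal (f u) u + (\<Sum>y\<in>S. scal (f y) y)" using assms False by simp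
    then show "\<exists>c w. w \<in> rspan S \<and> v = scal c u + w" by (auto simp: rspan_def)
  next
    assume "\<exists>c w. w \<in> rspan S \<and> v = scal c u + w"
    then obtain c f where "v = scal c u + (\<Sum>y\<in>S. scal (f y) y)" by (auto simp: rspan_def)
    also have "(\<Sum>y\<in>S. scal (f y) y) = (\<Sum>y\<in>S. scal ((f(u := c)) y) y)"
      using False by (intro sum.cong) auto
    also have "scal c u + \<dots> = (\<Sum>y\<in>insert u S. scal ((f(u := c)) y) y)"
      using assms False by simp
    finally show "v \<in> rspan (insert u S)" unfolding rspan_def by blast
  qed
qed

lemma mem_rspan_insertI: "finite S \<Longrightarrow> w \<in> rspan S \<Longrightarrow> scal c u + w \<in> rspan (insert u S)"
  using mem_rspan_insert by blast

lemma mem_rspan_singletonI: "scal c u \<in> rspan {u}"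
  using mem_rspan_insertI[of "{}" 0 c u] by (simp add: rspan_empty)

lemma mem_eigsp_iff: "v \<in> eigsp L c \<longleftrightarrow> (\<forall>x. mmult L v x = c * v x)"
  by (simp add: eigsp_def scal_def fun_eq_iff del: split_paired_All)

locale parallel_class =
  fixes l m n :: "pt set"
  assumes lines: "l \<in> aff_lines" "m \<in> aff_lines" "n \<in> aff_lines"
    and disjoint: "l \<inter> m = {}" "l \<inter> n = {}" "m \<inter> n = {}"

context parallel_class
begin

lemma Un_eq_UNIV: "l \<union> m \<union> n = UNIV"
proof (rule card_subset_eq)
  show "card (l \<union> m \<union> n) = card (UNIV :: pt set)"
    using lines disjoint
    by (simp add: card_aff_line card_Un_disjoint Int_Un_distrib2)
qed simp_all

lemma wedge_mem:
  assumes "x \<in> l" "y \<in> m"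
  shows "wedge x y \<in> n"
proof -
  have "x \<noteq> y" using assms disjoint by auto
  have "wedge x y \<notin> l"
  proof
    assume "wedge x y \<in> l"
    from aff_line_through[OF lines(1) assms(1) this] \<open>x \<noteq> y\<close> have "y \<in> l" by simp
    with assms(2) disjoint(1) show False by auto
  qed
  moreover have "wedge x y \<notin> m"
  proof
    assume "wedge x y \<in> m"
    from aff_line_through[OF lines(2) this assms(2)] \<open>x \<noteq> y\<close> have "x \<in> m" by simp
    with assms(1) disjoint(1) show False by auto
  qed
  ultimately show ?thesis using Un_eq_UNIV by auto
qed

lemma permute: "parallel_class l n m" "parallel_class n m l"
  using lines disjoint by (auto simp: parallel_class_def)

lemma sum_basis_prod_parallel:
  assumes "q \<in> m"
  shows "(\<Sum>p\<in>l. basis_prod p q x) = ind l x + 3 * pnt q x + ind n x"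
proof -
  have bij: "bij_betw (\<lambda>p. wedge p q) l n"
    by (rule bij_betw_byWitness[where f' = "\<lambda>p. wedge p q"])
      (use assms wedge_mem parallel_class.wedge_mem[OF permute(2)] in \<open>simp_all add: image_subset_iff\<close>)
  have "basis_prod p q x = pnt p x + pnt q x + pnt (wedge p q) x" if "p \<in> l" for p
  proof -
    have "p \<noteq> q" "wedge p q \<notin> {p, q}"
      using that assms disjoint wedge_mem by auto
    then show ?thesis by (simp add: basis_prod_def ind_eq_sum_pnt)
  qed
  then have "(\<Sum>p\<in>l. basis_prod p q x) = (\<Sum>p\<in>l. pnt p x + pnt q x + pnt (wedge p q) x)"
    by (rule sum.cong[OF refl])
  also have "\<dots> = (\<Sum>p\<in>l. pnt p x) + (\<Sum>p\<in>l. pnt q x) + (\<Sum>p\<in>l. pnt (wedge p q) x)"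
    by (simp add: sum.distrib)
  also have "(\<Sum>p\<in>l. pnt (wedge p q) x) = (\<Sum>y\<in>n. pnt y x)"
    by (rule sum.reindex_bij_betw[OF bij])
  finally show ?thesis
    by (simp add: ind_eq_sum_pnt card_aff_line[OF lines(1)])
qed

lemma mmult_ind_line:
  "mmult (ind l) v x = ind l x * (2 * sum v l + sum v m + sum v n)
     + ind m x * (3 * v x + sum v n) + ind n x * (3 * v x + sum v m)"
proof -
  have "mmult (ind l) v x = (\<Sum>q\<in>UNIV. \<Sum>p\<in>UNIV. ind l p * (v q * basis_prod p q x))"
    unfolding mmult_def by (subst sum.swap) (simp only: mult.assoc)
  also have "\<dots> = (\<Sum>q\<in>UNIV. v q * (\<Sum>p\<in>l. basis_prod p q x))"
    by (simp only: sum_ind_mult sum_distrib_left)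
  also have "\<dots> = (\<Sum>q\<in>l. v q * (\<Sum>p\<in>l. basis_prod p q x))
      + (\<Sum>q\<in>m. v q * (\<Sum>p\<in>l. basis_prod p q x)) + (\<Sum>q\<in>n. v q * (\<Sum>p\<in>l. basis_prod p q x))"
    unfolding Un_eq_UNIV[symmetric] using disjoint
    by (simp add: sum.union_disjoint Int_Un_distrib2)
  also have "\<dots> = (\<Sum>q\<in>l. v q * (2 * ind l x))
      + (\<Sum>q\<in>m. v q * (ind l x + 3 * pnt q x + ind n x))
      + (\<Sum>q\<in>n. v q * (ind l x + 3 * pnt q x + ind m x))"
    by (simp add: sum_basis_prod_same_line[OF lines(1)] sum_basis_prod_parallel
        parallel_class.sum_basis_prod_parallel[OF permute(1)])
  also have "\<dots> = 2 * sum v l * ind l x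
      + (sum v m * ind l x + 3 * (\<Sum>q\<in>m. v q * pnt q x) + sum v m * ind n x)
      + (sum v n * ind l x + 3 * (\<Sum>q\<in>n. v q * pnt q x) + sum v n * ind m x)"
    by (simp add: distrib_left sum.distrib sum_distrib_left sum_distrib_right mult_ac)
  also have "\<dots> = ind l x * (2 * sum v l + sum v m + sum v n)
     + ind m x * (3 * v x + sum v n) + ind n x * (3 * v x + sum v m)"
    by (simp add: sum_mult_pnt algebra_simps)
  finally show ?thesis .
qed

lemma point_cases:
  obtains "x \<in> l" | "x \<in> m" | "x \<in> n"
  using Un_eq_UNIV by blast

lemma rspan_pnts_ind_UNIV:
  assumes l: "l = {a1, a2, a3}" "distinct [a1, a2, a3]"
  shows "rspan {pnt a1, pnt a2, pnt a3, ind UNIV}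
    = {v :: pt \<Rightarrow> 'a::comm_ring_1. \<exists>t. \<forall>x\<in>m \<union> n. v x = t}"
proof (intro set_eqI iffI)
  fix v :: "pt \<Rightarrow> 'a"
  assume "v \<in> rspan {pnt a1, pnt a2, pnt a3, ind UNIV}"
  then obtain d1 d2 d3 t where v: "v = scal d1 (pnt a1) + (scal d2 (pnt a2)
      + (scal d3 (pnt a3) + scal t (ind UNIV)))"
    by (auto simp: mem_rspan_insert rspan_empty)
  have "\<forall>x\<in>m \<union> n. v x = t"
    using l disjoint by (auto simp: v scal_def pnt_def ind_def)
  then show "v \<in> {v. \<exists>t. \<forall>x\<in>m \<union> n. v x = t}" by blast
next
  fix v :: "pt \<Rightarrow> 'a"
  assume "v \<in> {v. \<exists>t. \<forall>x\<in>m \<union> n. v x = t}"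
  then obtain t where t: "\<forall>x\<in>m \<union> n. v x = t" by blast
  define w where "w = scal (v a1 - t) (pnt a1) + (scal (v a2 - t) (pnt a2)
      + (scal (v a3 - t) (pnt a3) + scal t (ind UNIV)))"
  have "w a1 = v a1" "w a2 = v a2" "w a3 = v a3"
    using l by (auto simp: w_def scal_def pnt_def ind_def)
  moreover have "w x = t" if "x \<in> m \<union> n" for x
    using that l disjoint by (auto simp: w_def scal_def pnt_def ind_def)
  ultimately have "v x = w x" for x
    using t l by (cases x rule: point_cases) auto
  then have "v = w" by blast
  moreover have "w \<in> rspan {pnt a1, pnt a2, pnt a3, ind UNIV}"
    unfolding w_def by (intro mem_rspan_insertI mem_rspan_singletonI) simp_all
  ultimately show "v \<in> rspan {pnt a1, pnt a2, pnt a3, ind UNIV}" by simp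
qed

lemma rspan_pnts_ind_lines:
  assumes l: "l = {a1, a2, a3}" "distinct [a1, a2, a3]"
  shows "rspan {pnt a1, pnt a2, pnt a3, ind m, ind n}
    = {v :: pt \<Rightarrow> 'a::comm_ring_1. (\<exists>s. \<forall>x\<in>m. v x = s) \<and> (\<exists>t. \<forall>x\<in>n. v x = t)}"
proof (intro set_eqI iffI)
  fix v :: "pt \<Rightarrow> 'a"
  assume "v \<in> rspan {pnt a1, pnt a2, pnt a3, ind m, ind n}"
  then obtain d1 d2 d3 s t where v: "v = scal d1 (pnt a1) + (scal d2 (pnt a2)
      + (scal d3 (pnt a3) + (scal s (ind m) + scal t (ind n))))"
    by (auto simp: mem_rspan_insert rspan_empty)
  have "\<forall>x\<in>m. v x = s" "\<forall>x\<in>n. v x = t"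
    using l disjoint by (auto simp: v scal_def pnt_def ind_def)
  then show "v \<in> {v. (\<exists>s. \<forall>x\<in>m. v x = s) \<and> (\<exists>t. \<forall>x\<in>n. v x = t)}" by blast
next
  fix v :: "pt \<Rightarrow> 'a"
  assume "v \<in> {v. (\<exists>s. \<forall>x\<in>m. v x = s) \<and> (\<exists>t. \<forall>x\<in>n. v x = t)}"
  then obtain s t where s: "\<forall>x\<in>m. v x = s" and t: "\<forall>x\<in>n. v x = t" by blast
  define w where "w = scal (v a1) (pnt a1) + (scal (v a2) (pnt a2)
      + (scal (v a3) (pnt a3) + (scal s (ind m) + scal t (ind n))))"
  have "w a1 = v a1" "w a2 = v a2" "w a3 = v a3"
    using l disjoint by (auto simp: w_def scal_def pnt_def ind_def)
  moreover have "w x = s" if "x \<in> m" for x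
    using that l disjoint by (auto simp: w_def scal_def pnt_def ind_def)
  moreover have "w x = t" if "x \<in> n" for x
    using that l disjoint by (auto simp: w_def scal_def pnt_def ind_def)
  ultimately have "v x = w x" for x
    using s t l by (cases x rule: point_cases) auto
  then have "v = w" by blast
  moreover have "w \<in> rspan {pnt a1, pnt a2, pnt a3, ind m, ind n}"
    unfolding w_def by (intro mem_rspan_insertI mem_rspan_singletonI) simp_all
  ultimately show "v \<in> rspan {pnt a1, pnt a2, pnt a3, ind m, ind n}" by simp
qed

context
  assumes char2: "(2::'r::comm_ring_1) = 0"
begin

lemma mmult_ind_line_char2:
  fixes v :: "pt \<Rightarrow> 'r"
  shows "x \<in> l \<Longrightarrow> mmult (ind l) v x = sum v m + sum v n"
    and "x \<in> m \<Longrightarrow> mmult (ind l) v x = v x + sum v n"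
    and "x \<in> n \<Longrightarrow> mmult (ind l) v x = v x + sum v m"
  unfolding mmult_ind_line using disjoint char2
  by (auto simp: ind_def char2_three_times[OF char2])

lemma mem_eigsp_0_iff:
  fixes v :: "pt \<Rightarrow> 'r"
  shows "v \<in> eigsp (ind l) 0 \<longleftrightarrow> (\<exists>t. \<forall>x\<in>m \<union> n. v x = t)"
proof
  assume "v \<in> eigsp (ind l) 0"
  then have ad: "mmult (ind l) v x = 0" for x
    by (simp add: mem_eigsp_iff del: split_paired_All)
  obtain a where "a \<in> l" using aff_line_nonempty[OF lines(1)] by blast
  then have "sum v m + sum v n = 0"
    using ad[of a] by (simp add: mmult_ind_line_char2)
  then have "sum v m = sum v n"
    by (simp add: char2_add_eq_0_iff[OF char2])
  moreover have "v x = sum v n" if "x \<in> m" for x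
    using ad[of x] that by (simp add: mmult_ind_line_char2 char2_add_eq_0_iff[OF char2])
  moreover have "v x = sum v m" if "x \<in> n" for x
    using ad[of x] that by (simp add: mmult_ind_line_char2 char2_add_eq_0_iff[OF char2])
  ultimately have "\<forall>x\<in>m \<union> n. v x = sum v n" by (metis Un_iff)
  then show "\<exists>t. \<forall>x\<in>m \<union> n. v x = t" by blast
next
  assume "\<exists>t. \<forall>x\<in>m \<union> n. v x = t"
  then obtain t where t: "\<And>x. x \<in> m \<union> n \<Longrightarrow> v x = t" by blast
  then have "sum v m = t" "sum v n = t"
    using sum_aff_line_const[OF char2] lines by auto
  then have "mmult (ind l) v x = 0" for x
    by (cases x rule: point_cases) (simp_all add: t mmult_ind_line_char2 char2_add_self[OF char2])
  then show "v \<in> eigsp (ind l) 0" by (simp add: mem_eigsp_iff)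
qed

lemma mem_eigsp_1_iff:
  fixes v :: "pt \<Rightarrow> 'r"
  shows "v \<in> eigsp (ind l) 1 \<longleftrightarrow> (\<forall>x\<in>l. v x = 0) \<and> sum v m = 0 \<and> sum v n = 0"
proof
  assume "v \<in> eigsp (ind l) 1"
  then have ad: "mmult (ind l) v x = v x" for x
    by (simp add: mem_eigsp_iff del: split_paired_All)
  obtain b c where "b \<in> m" "c \<in> n" using aff_line_nonempty lines by blast
  have "sum v n = 0" using ad[of b] \<open>b \<in> m\<close> by (simp add: mmult_ind_line_char2)
  moreover have "sum v m = 0" using ad[of c] \<open>c \<in> n\<close> by (simp add: mmult_ind_line_char2)
  moreover have "v x = 0" if "x \<in> l" for x
    using ad[of x] that calculation by (simp add: mmult_ind_line_char2)
  ultimately show "(\<forall>x\<in>l. v x = 0) \<and> sum v m = 0 \<and> sum v n = 0" by blast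
next
  assume "(\<forall>x\<in>l. v x = 0) \<and> sum v m = 0 \<and> sum v n = 0"
  then have "mmult (ind l) v x = v x" for x
    by (cases x rule: point_cases) (simp_all add: mmult_ind_line_char2)
  then show "v \<in> eigsp (ind l) 1" by (simp add: mem_eigsp_iff)
qed

lemma mem_geigsp_0_iff:
  fixes v :: "pt \<Rightarrow> 'r"
  shows "v \<in> geigsp (ind l) 0 \<longleftrightarrow> (\<exists>s. \<forall>x\<in>m. v x = s) \<and> (\<exists>t. \<forall>x\<in>n. v x = t)"
    (is "_ \<longleftrightarrow> ?P v")
proof -
  have ad0: "(\<lambda>w. mmult (ind l) w - scal 0 w) = mmult (ind l)"
    by (simp add: scal_def fun_eq_iff)
  have geig: "geigsp (ind l) 0 = {v. \<exists>k. (mmult (ind l) ^^ k) v = 0}"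
    unfolding geigsp_def ad0 ..
  have reflect: "?P w" if const: "?P (mmult (ind l) w)" for w
  proof -
    obtain s t where s: "\<forall>x\<in>m. mmult (ind l) w x = s" and t: "\<forall>x\<in>n. mmult (ind l) w x = t"
      using const by blast
    have "w x = s + sum w n" if "x \<in> m" for x
    proof -
      have "s = w x + sum w n" using s that by (simp add: mmult_ind_line_char2)
      then show ?thesis by (simp add: add.assoc char2_add_self[OF char2])
    qed
    moreover have "w x = t + sum w m" if "x \<in> n" for x
    proof -
      have "t = w x + sum w m" using t that by (simp add: mmult_ind_line_char2)
      then show ?thesis by (simp add: add.assoc char2_add_self[OF char2])
    qed
    ultimately have "\<forall>x\<in>m. w x = s + sum w n" "\<forall>x\<in>n. w x = t + sum w m"
      by blast+
    then show ?thesis by blast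
  qed
  show ?thesis
  proof
    assume "v \<in> geigsp (ind l) 0"
    then obtain k where "(mmult (ind l) ^^ k) v = 0" using geig by blast
    then have "?P ((mmult (ind l) ^^ k) v)" by simp
    from funpow_reflects[of ?P "mmult (ind l)", OF reflect this] show "?P v" .
  next
    assume "?P v"
    then obtain s t where s: "\<forall>x\<in>m. v x = s" and t: "\<forall>x\<in>n. v x = t" by blast
    then have "sum v m = s" "sum v n = t"
      using sum_aff_line_const[OF char2] lines by blast+
    then have "\<forall>x\<in>m \<union> n. mmult (ind l) v x = s + t"
      using s t by (auto simp: mmult_ind_line_char2 add.commute)
    then have "mmult (ind l) v \<in> eigsp (ind l) 0"
      by (auto simp: mem_eigsp_0_iff)
    then have "(mmult (ind l) ^^ 2) v = 0"
      by (simp add: eigsp_def scal_def numeral_2_eq_2 fun_eq_iff)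
    then show "v \<in> geigsp (ind l) 0" using geig by blast
  qed
qed

lemma geigsp_1_eq: "geigsp (ind l) 1 = (eigsp (ind l) 1 :: (pt \<Rightarrow> 'r) set)"
proof -
  define ad :: "(pt \<Rightarrow> 'r) \<Rightarrow> pt \<Rightarrow> 'r" where "ad w = mmult (ind l) w - scal 1 w" for w
  let ?E = "\<lambda>w :: pt \<Rightarrow> 'r. (\<forall>x\<in>l. w x = 0) \<and> sum w m = 0 \<and> sum w n = 0"
  have geig: "geigsp (ind l) 1 = {v. \<exists>k. (ad ^^ k) v = 0}"
    unfolding geigsp_def ad_def ..
  have reflect: "?E w" if E: "?E (ad w)" for w
  proof -
    have "ad w x = sum w n" if "x \<in> m" for x
      using that by (simp add: ad_def scal_def mmult_ind_line_char2)
    then have "sum (ad w) m = sum w n" by (rule sum_aff_line_const[OF char2 lines(2)])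
    then have Sn: "sum w n = 0" using E by simp
    have "ad w x = sum w m" if "x \<in> n" for x
      using that by (simp add: ad_def scal_def mmult_ind_line_char2)
    then have "sum (ad w) n = sum w m" by (rule sum_aff_line_const[OF char2 lines(3)])
    then have Sm: "sum w m = 0" using E by simp
    have "w x = 0" if "x \<in> l" for x
      using E that Sm Sn by (simp add: ad_def scal_def mmult_ind_line_char2)
    with Sm Sn show ?thesis by blast
  qed
  show ?thesis
  proof (intro equalityI subsetI)
    fix v :: "pt \<Rightarrow> 'r"
    assume "v \<in> geigsp (ind l) 1"
    then obtain k where "(ad ^^ k) v = 0" using geig by blast
    then have "?E ((ad ^^ k) v)" by simp
    from funpow_reflects[of ?E ad, OF reflect this] show "v \<in> eigsp (ind l) 1"
      by (simp add: mem_eigsp_1_iff)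
  next
    fix v :: "pt \<Rightarrow> 'r"
    assume "v \<in> eigsp (ind l) 1"
    then have "(ad ^^ 1) v = 0" by (simp add: ad_def eigsp_def)
    then show "v \<in> geigsp (ind l) 1" using geig by blast
  qed
qed

lemma geigsp_0_plus_eigsp_1:
  fixes v :: "pt \<Rightarrow> 'r"
  shows "\<exists>x y. x \<in> geigsp (ind l) 0 \<and> y \<in> eigsp (ind l) 1 \<and> v = x + y"
proof -
  define x :: "pt \<Rightarrow> 'r"
    where "x p = (if p \<in> l then v p else if p \<in> m then sum v m else sum v n)" for p
  have x_m: "x p = sum v m" if "p \<in> m" for p
    using that disjoint by (auto simp: x_def)
  have x_n: "x p = sum v n" if "p \<in> n" for p
    using that disjoint by (auto simp: x_def)
  have "x \<in> geigsp (ind l) 0"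
    using x_m x_n by (auto simp: mem_geigsp_0_iff)
  moreover have "v - x \<in> eigsp (ind l) 1"
  proof -
    have "sum x m = sum v m" "sum x n = sum v n"
      using sum_aff_line_const[OF char2] lines x_m x_n by blast+
    then show ?thesis by (simp add: mem_eigsp_1_iff x_def sum_subtractf)
  qed
  ultimately show ?thesis by force
qed

lemma geigsp_0_Int_eigsp_1: "geigsp (ind l) 0 \<inter> eigsp (ind l) 1 = {0 :: pt \<Rightarrow> 'r}"
proof (intro equalityI subsetI)
  fix v :: "pt \<Rightarrow> 'r"
  assume "v \<in> geigsp (ind l) 0 \<inter> eigsp (ind l) 1"
  then have "v \<in> geigsp (ind l) 0" "v \<in> eigsp (ind l) 1" by auto
  then obtain s t where s: "\<forall>x\<in>m. v x = s" and t: "\<forall>x\<in>n. v x = t"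
    and "\<forall>x\<in>l. v x = 0" "sum v m = 0" "sum v n = 0"
    unfolding mem_geigsp_0_iff mem_eigsp_1_iff by blast
  moreover have "sum v m = s" "sum v n = t"
    using sum_aff_line_const[OF char2] lines s t by blast+
  ultimately have "v x = 0" for x
    by (cases x rule: point_cases) simp_all
  then show "v \<in> {0}" by (simp add: fun_eq_iff)
qed (simp add: mem_geigsp_0_iff mem_eigsp_1_iff)

lemma is_eigenvalue_0: "is_eigenvalue (ind l :: pt \<Rightarrow> 'r) 0"
proof -
  obtain a where "a \<in> l" using aff_line_nonempty[OF lines(1)] by blast
  then have "\<forall>x\<in>m \<union> n. pnt a x = (0::'r)" using disjoint by (auto simp: pnt_def ind_def)
  then have "(pnt a :: pt \<Rightarrow> 'r) \<in> eigsp (ind l) 0" by (auto simp: mem_eigsp_0_iff)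
  moreover have "pnt a a = (1::'r)" by (simp add: pnt_def ind_def)
  then have "(pnt a :: pt \<Rightarrow> 'r) \<noteq> 0" by (metis zero_fun_apply zero_neq_one)
  ultimately show ?thesis by (rule is_eigenvalueI)
qed

lemma is_eigenvalue_1: "is_eigenvalue (ind l :: pt \<Rightarrow> 'r) 1"
proof -
  obtain p q where m: "m = {p, q, wedge p q}" "p \<noteq> q"
    using lines(2) by (auto simp: aff_lines_def)
  have "p \<in> m" "q \<in> m" using m by auto
  have "\<forall>x\<in>l. (pnt p + pnt q) x = (0::'r)"
    using disjoint \<open>p \<in> m\<close> \<open>q \<in> m\<close> by (auto simp: pnt_def ind_def)
  moreover have "sum (pnt p + pnt q) m = (0::'r)"
    using m char2 by (simp add: pnt_def ind_def)
  moreover have "sum (pnt p + pnt q) n = (0::'r)"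
    using disjoint \<open>p \<in> m\<close> \<open>q \<in> m\<close> by (auto simp: pnt_def ind_def intro!: sum.neutral)
  ultimately have "(pnt p + pnt q :: pt \<Rightarrow> 'r) \<in> eigsp (ind l) 1"
    by (simp add: mem_eigsp_1_iff)
  moreover have "(pnt p + pnt q) p = (1::'r)" using m by (simp add: pnt_def ind_def)
  then have "(pnt p + pnt q :: pt \<Rightarrow> 'r) \<noteq> 0" by (metis zero_fun_apply zero_neq_one)
  ultimately show ?thesis by (rule is_eigenvalueI)
qed

lemma rspan_pnt_pair_sums:
  assumes m: "m = {b1, b2, b3}" "distinct [b1, b2, b3]"
    and n: "n = {c1, c2, c3}" "distinct [c1, c2, c3]"
  shows "rspan {pnt b1 + pnt b2, pnt b1 + pnt b3, pnt c1 + pnt c2, pnt c1 + pnt c3}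
    = {v :: pt \<Rightarrow> 'r. (\<forall>x\<in>l. v x = 0) \<and> sum v m = 0 \<and> sum v n = 0}"
proof (intro set_eqI iffI)
  fix v :: "pt \<Rightarrow> 'r"
  assume "v \<in> rspan {pnt b1 + pnt b2, pnt b1 + pnt b3, pnt c1 + pnt c2, pnt c1 + pnt c3}"
  then obtain d1 d2 d3 d4 where v: "v = scal d1 (pnt b1 + pnt b2) + (scal d2 (pnt b1 + pnt b3)
      + (scal d3 (pnt c1 + pnt c2) + scal d4 (pnt c1 + pnt c3)))"
    by (auto simp: mem_rspan_insert rspan_empty)
  have "v x = 0" if "x \<in> l" for x
  proof -
    have "x \<notin> m \<union> n" using that disjoint by blast
    then show ?thesis using m n by (simp add: v scal_def pnt_def ind_def)
  qed
  moreover have "v b1 = d1 + d2" "v b2 = d1" "v b3 = d2" "v c1 = d3 + d4" "v c2 = d3" "v c3 = d4"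
    using m n disjoint by (simp_all add: v scal_def pnt_def ind_def eq_commute[where 'a = pt])
  then have "sum v m = 0" "sum v n = 0"
    using m n by (simp_all add: char2_add_self[OF char2])
  ultimately show "v \<in> {v. (\<forall>x\<in>l. v x = 0) \<and> sum v m = 0 \<and> sum v n = 0}" by simp
next
  fix v :: "pt \<Rightarrow> 'r"
  assume "v \<in> {v. (\<forall>x\<in>l. v x = 0) \<and> sum v m = 0 \<and> sum v n = 0}"
  then have l0: "\<forall>x\<in>l. v x = 0" and "v b1 + (v b2 + v b3) = 0" "v c1 + (v c2 + v c3) = 0"
    using m n by auto
  then have b1: "v b1 = v b2 + v b3" and c1: "v c1 = v c2 + v c3"
    by (simp_all add: char2_add_eq_0_iff[OF char2])
  define w where "w = scal (v b2) (pnt b1 + pnt b2) + (scal (v b3) (pnt b1 + pnt b3)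
      + (scal (v c2) (pnt c1 + pnt c2) + scal (v c3) (pnt c1 + pnt c3)))"
  have "w b1 = v b2 + v b3" "w b2 = v b2" "w b3 = v b3"
    "w c1 = v c2 + v c3" "w c2 = v c2" "w c3 = v c3"
    using m n disjoint by (simp_all add: w_def scal_def pnt_def ind_def eq_commute[where 'a = pt])
  moreover have "w x = 0" if "x \<in> l" for x
  proof -
    have "x \<notin> m \<union> n" using that disjoint by blast
    then show ?thesis using m n by (simp add: w_def scal_def pnt_def ind_def)
  qed
  ultimately have "v x = w x" for x
    using l0 b1 c1 m n by (cases x rule: point_cases) auto
  then have "v = w" by blast
  moreover have "w \<in> rspan {pnt b1 + pnt b2, pnt b1 + pnt b3, pnt c1 + pnt c2, pnt c1 + pnt c3}"
    unfolding w_def by (intro mem_rspan_insertI mem_rspan_singletonI) simp_all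
  ultimately show "v \<in> rspan {pnt b1 + pnt b2, pnt b1 + pnt b3, pnt c1 + pnt c2, pnt c1 + pnt c3}"
    by simp
qed

end

end

theorem proposition5p16:
  fixes l m n :: "pt set" and a1 a2 a3 b1 b2 b3 c1 c2 c3 :: pt
  assumes "l \<in> aff_lines" and "m \<in> aff_lines" and "n \<in> aff_lines"
    and "l \<inter> m = {}" and "l \<inter> n = {}" and "m \<inter> n = {}"
    and "l = {a1, a2, a3}" and "distinct [a1, a2, a3]"
    and "m = {b1, b2, b3}" and "distinct [b1, b2, b3]"
    and "n = {c1, c2, c3}" and "distinct [c1, c2, c3]"
    and two: "(2::'r::comm_ring_1) = 0"
  defines "s \<equiv> (ind UNIV :: pt \<Rightarrow> 'r)" and "L \<equiv> (ind l :: pt \<Rightarrow> 'r)"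
  shows "is_eigenvalue L 0
    \<and> is_eigenvalue L 1
    \<and> eigsp L 0 = rspan {pnt a1, pnt a2, pnt a3, s}
    \<and> eigsp L 1 = rspan {pnt b1 + pnt b2, pnt b1 + pnt b3,
                                 pnt c1 + pnt c2, pnt c1 + pnt c3}
    \<and> geigsp L 0 = rspan {pnt a1, pnt a2, pnt a3, ind m, ind n}
    \<and> geigsp L 1 = eigsp L 1
    \<and> (\<forall>v::pt \<Rightarrow> 'r. \<exists>x y. x \<in> geigsp L 0 \<and> y \<in> eigsp L 1 \<and> v = x + y)
    \<and> geigsp L 0 \<inter> eigsp L 1 = {0}"
proof -
  interpret parallel_class l m n
    using assms(1-6) by unfold_locales
  have "eigsp (ind l) 0 = rspan {pnt a1, pnt a2, pnt a3, ind UNIV :: pt \<Rightarrow> 'r}"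
    unfolding rspan_pnts_ind_UNIV[OF assms(7,8)] by (auto simp: mem_eigsp_0_iff[OF two])
  moreover have "eigsp (ind l) 1
      = rspan {pnt b1 + pnt b2, pnt b1 + pnt b3, pnt c1 + pnt c2, pnt c1 + pnt c3 :: pt \<Rightarrow> 'r}"
    unfolding rspan_pnt_pair_sums[OF two assms(9-12)] by (auto simp: mem_eigsp_1_iff[OF two])
  moreover have "geigsp (ind l) 0 = rspan {pnt a1, pnt a2, pnt a3, ind m, ind n :: pt \<Rightarrow> 'r}"
    unfolding rspan_pnts_ind_lines[OF assms(7,8)] by (auto simp: mem_geigsp_0_iff[OF two])
  ultimately show ?thesis
    unfolding L_def s_def
    using is_eigenvalue_0[OF two] is_eigenvalue_1[OF two] geigsp_1_eq[OF two]
      geigsp_0_plus_eigsp_1[OF two] geigsp_0_Int_eigsp_1[OF two]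
    by blast
qed

end
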